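(* Assume $\Phi^{y,\dagger}\in L^1_{\mu_\theta}$ and $\Phi^{y,\mathrm{joint}}\in L^1_{\mu_\theta\otimes\mu_\delta}$. Then $$\max\{d_{\mathrm{KL}}(\mu^{y,\dagger}_{\theta,\delta}\Vert\mu^{y,\mathrm{joint}}_{\theta,\delta}),d_{\mathrm{KL}}(\mu^{y,\mathrm{joint}}_{\theta,\delta}\Vert\mu^{y,\dagger}_{\theta,\delta})\}\le C\Big\|\,|\mathcal{O}(\delta^\dagger-\delta)(\theta)|^2_{\Sigma_\varepsilon^{-1}}\Big\|^{1/2}_{L^1_{\mathbb{P}}},$$ where $C=2^{1/2}\exp\big(2\|\Phi^{y,\mathrm{joint}}\|_{L^1_{\mu_\theta\otimes\mu_\delta}}+2\|\Phi^{y,\dagger}\|_{L^1_{\mu_\theta}}\big)\big(\|\Phi^{y,\mathrm{joint}}\|^{1/2}_{L^1_{\mu_\theta\otimes\mu_\delta}}+\|\Phi^{y,\dagger}\|^{1/2}_{L^1_{\mu_\theta}}\big)$.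
   Context: Let $\Theta$ be a Borel subset of a separable Banach space and $\mu_\theta$ a Borel probability measure on $\Theta$. Let $\mathcal{U}$ be a Banach space, $n\in\mathbb{N}$, $\mathcal{O}:\mathcal{U}\to\mathbb{R}^n$ continuous linear, $\mathcal{M}^\dagger,\mathcal{M}:\Theta\to\mathcal{U}$ measurable, $\delta^\dagger:=\mathcal{M}^\dagger-\mathcal{M}$. Let $\Sigma_\varepsilon\in\mathbb{R}^{n\times n}$ be symmetric positive definite, $y\in\mathbb{R}^n$ fixed, $|a|_L:=(a^\top La)^{1/2}$. Let $\Delta$ be a Radon space whose elements $\delta'$ are maps $\Theta\to\mathcal{U}$ with $(\theta',\delta')\mapsto\delta'(\theta')$ jointly measurable, and $\mu_\delta$ a Borel probability measure on $\Delta$. Misfits: $\Phi^{y,\dagger}(\theta')=\tfrac12|y-\mathcal{O}\mathcal{M}^\dagger(\theta')|^2_{\Sigma_\varepsilon^{-1}}$, lifted to $\Theta\times\Delta$ by $\Phi^{y,\dagger}(\theta',\delta'):=\Phi^{y,\dagger}(\theta')$; $\Phi^{y,\mathrm{joint}}(\theta',\delta')=\tfrac12|y-\mathcal{O}\mathcal{M}(\theta')-\mathcal{O}\delta'(\theta')|^2_{\Sigma_\varepsilon^{-1}}$. For a probability measure $\mu$ and measurable $\Phi\ge0$, $\mu_\Phi$ has density $\exp(-\Phi)/\int\exp(-\Phi)d\mu$ w.r.t. $\mu$. $\mu^{y,\dagger}_{\theta,\delta}:=(\mu_\theta\otimes\mu_\delta)_{\Phi^{y,\dagger}}$ and $\mu^{y,\mathrm{joint}}_{\theta,\delta}:=(\mu_\theta\otimes\mu_\delta)_{\Phi^{y,\mathrm{joint}}}$.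 $\theta\sim\mu_\theta$, $\delta\sim\mu_\delta$ independent under $\mathbb{P}$, so $\|F(\theta,\delta)\|_{L^1_{\mathbb{P}}}=\int|F|\,d(\mu_\theta\otimes\mu_\delta)$. $d_{\mathrm{KL}}(\mu\Vert\nu)=\int\log\frac{d\mu}{d\nu}d\mu$ if $\mu\ll\nu$, $+\infty$ otherwise. *)

theory Defs
  imports "HOL-Probability.Probability"
begin

definition wnorm :: "real^'n^'n \<Rightarrow> real^'n \<Rightarrow> real" where
  "wnorm L a = sqrt (a \<bullet> (L *v a))"

definition spd :: "real^'n^'n \<Rightarrow> bool" where
  "spd S \<longleftrightarrow> transpose S = S \<and> (\<forall>x. x \<noteq> 0 \<longrightarrow> x \<bullet> (S *v x) > 0)"

definition reweight :: "'a measure \<Rightarrow> ('a \<Rightarrow> real) \<Rightarrow> 'a measure" where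
  "reweight \<mu> \<Phi> = density \<mu> (\<lambda>x. ennreal (exp (- \<Phi> x) / (\<integral>z. exp (- \<Phi> z) \<partial>\<mu>)))"

text \<open>For probability measures the negative part of the integrand is always integrable, so
  non-integrability means the integral is +infinity.\<close>
definition dKL :: "'a measure \<Rightarrow> 'a measure \<Rightarrow> ereal" where
  "dKL \<mu> \<nu> =
     (if sets \<mu> = sets \<nu> \<and> absolutely_continuous \<nu> \<mu>
         \<and> integrable \<mu> (\<lambda>x. ln (enn2real (RN_deriv \<nu> \<mu> x)))
      then ereal (\<integral>x. ln (enn2real (RN_deriv \<nu> \<mu> x)) \<partial>\<mu>)
      else \<infinity>)"

end

theory Submission
  imports Defs
begin

(* Both posteriors reweight the same prior by the potentials P = Phi^dag and Q = Phi^joint.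
   For such Gibbs reweightings of a probability measure the log-density ratio is
   Q - P + ln (Z_Q / Z_P); bounding the logarithm by ln r <= r - 1 and the normaliser from below by
   Jensen, Z_P >= exp (- int P), gives d_KL <= exp (int P) * int |P - Q|.  Both potentials are halves
   of the quadratic form |.|^2 of Sigma^-1, so their difference is the bilinear pairing of a - b and
   a + b; a pointwise AM-GM split with a free parameter t, optimised only after integrating, bounds
   int |P - Q| by (int |a - b|^2 * (int P + int Q))^(1/2), and a - b is O (delta^dag - delta) (theta). *)

lemma inner_matrix_vector_symmetric:
  fixes L :: "real^'n^'n"
  assumes "transpose L = L"
  shows "u \<bullet> (L *v v) = v \<bullet> (L *v u)"
proof -
  have "u \<bullet> (L *v v) = (u v* L) \<bullet> v" by (simp add: dot_lmul_matrix)
  also have "u v* L = L *v u" by (metis assms transpose_transpose vector_transpose_matrix)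
  finally show ?thesis by (simp add: inner_commute)
qed

lemma spd_nonneg: "spd S \<Longrightarrow> 0 \<le> v \<bullet> (S *v v)"
  unfolding spd_def by (cases "v = 0") (auto intro: less_imp_le)

lemma spd_matrix_inv:
  fixes S :: "real^'n^'n"
  assumes "spd S"
  shows "S ** matrix_inv S = mat 1" and "matrix_inv S ** S = mat 1"
proof -
  have "S *v x = 0 \<Longrightarrow> x = 0" for x
    using assms unfolding spd_def by (metis inner_zero_right less_irrefl)
  then obtain B :: "real^'n^'n" where "B ** S = mat 1"
    using matrix_left_invertible_ker by blast
  then have "invertible S" using invertible_left_inverse by blast
  then have "S ** matrix_inv S = mat 1 \<and> matrix_inv S ** S = mat 1"
    unfolding matrix_inv_def invertible_def by (rule someI_ex)
  then show "S ** matrix_inv S = mat 1" and "matrix_inv S ** S = mat 1" by auto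
qed

lemma spd_matrix_inv_spd:
  fixes S :: "real^'n^'n"
  assumes S: "spd S"
  shows "spd (matrix_inv S)"
proof -
  define L where "L = matrix_inv S"
  have symS: "transpose S = S" using S unfolding spd_def by simp
  have "S ** transpose L = mat 1"
    using spd_matrix_inv(2)[OF S] by (metis L_def matrix_transpose_mul symS transpose_mat)
  then have "transpose L = (L ** S) ** transpose L"
    using spd_matrix_inv(2)[OF S] by (simp add: L_def matrix_mul_lid)
  also have "\<dots> = L"
    by (simp add: matrix_mul_assoc[symmetric] \<open>S ** transpose L = mat 1\<close> matrix_mul_rid)
  finally have symL: "transpose L = L" .
  have "v \<bullet> (L *v v) > 0" if "v \<noteq> 0" for v
  proof -
    define w where "w = L *v v"
    have Sw: "S *v w = v"
      using spd_matrix_inv(1)[OF S] by (simp add: w_def L_def matrix_vector_mul_assoc)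
    then have "w \<noteq> 0" using that by auto
    then have "w \<bullet> (S *v w) > 0" using S unfolding spd_def by blast
    then show ?thesis using Sw by (simp add: w_def inner_commute)
  qed
  then show ?thesis using symL by (simp add: spd_def L_def)
qed

lemma wnorm_squared: "0 \<le> a \<bullet> (L *v a) \<Longrightarrow> (wnorm L a)\<^sup>2 = a \<bullet> (L *v a)"
  by (simp add: wnorm_def)

lemma quad_form_polarization:
  fixes L :: "real^'n^'n"
  assumes "transpose L = L"
  shows "a \<bullet> (L *v a) - b \<bullet> (L *v b) = (a - b) \<bullet> (L *v (a + b))"
  using inner_matrix_vector_symmetric[OF assms, of b a]
  by (simp add: matrix_vector_right_distrib inner_add_right inner_diff_left)

lemma quad_form_parallelogram:
  fixes L :: "real^'n^'n"
  assumes "transpose L = L"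
  shows "(a + b) \<bullet> (L *v (a + b)) + (a - b) \<bullet> (L *v (a - b))
           = 2 * (a \<bullet> (L *v a)) + 2 * (b \<bullet> (L *v b))"
  using inner_matrix_vector_symmetric[OF assms, of b a]
  by (simp add: matrix_vector_right_distrib matrix_vector_mult_diff_distrib
      inner_add_left inner_add_right inner_diff_left inner_diff_right)

lemma abs_bilinear_le_quad_forms:
  fixes L :: "real^'n^'n"
  assumes sym: "transpose L = L" and psd: "\<And>v. 0 \<le> v \<bullet> (L *v v)" and t: "t > 0"
  shows "2 * t * \<bar>u \<bullet> (L *v w)\<bar> \<le> t\<^sup>2 * (u \<bullet> (L *v u)) + w \<bullet> (L *v w)"
proof -
  have swap: "w \<bullet> (L *v u) = u \<bullet> (L *v w)" by (rule inner_matrix_vector_symmetric[OF sym])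
  have "(t *\<^sub>R u + s *\<^sub>R w) \<bullet> (L *v (t *\<^sub>R u + s *\<^sub>R w))
          = t\<^sup>2 * (u \<bullet> (L *v u)) + 2 * s * t * (u \<bullet> (L *v w)) + s\<^sup>2 * (w \<bullet> (L *v w))" for s
    by (simp add: matrix_vector_right_distrib matrix_vector_mult_scaleR inner_add_left
        inner_add_right swap power2_eq_square algebra_simps)
  from psd[of "t *\<^sub>R u + w"] psd[of "t *\<^sub>R u + (-1) *\<^sub>R w"] this[of 1] this[of "-1"]
  show ?thesis using t by (simp add: abs_if)
qed

lemma abs_quad_form_diff_le:
  fixes L :: "real^'n^'n"
  assumes sym: "transpose L = L" and psd: "\<And>v. 0 \<le> v \<bullet> (L *v v)" and t: "t > 0"
  shows "\<bar>a \<bullet> (L *v a) / 2 - b \<bullet> (L *v b) / 2\<bar>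
           \<le> t / 4 * ((a - b) \<bullet> (L *v (a - b))) + (a \<bullet> (L *v a) / 2 + b \<bullet> (L *v b) / 2) / t"
proof -
  have "2 * t * \<bar>a \<bullet> (L *v a) - b \<bullet> (L *v b)\<bar>
          \<le> t\<^sup>2 * ((a - b) \<bullet> (L *v (a - b))) + (a + b) \<bullet> (L *v (a + b))"
    unfolding quad_form_polarization[OF sym] by (rule abs_bilinear_le_quad_forms[OF sym psd t])
  also have "\<dots> \<le> t\<^sup>2 * ((a - b) \<bullet> (L *v (a - b))) + 2 * (a \<bullet> (L *v a) + b \<bullet> (L *v b))"
    using quad_form_parallelogram[OF sym, of a b] psd[of "a - b"] by simp
  finally show ?thesis using t by (simp add: field_simps power2_eq_square)
qed

lemma exp_minus_diff_le_abs:
  fixes p q :: real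
  assumes "0 \<le> p" "0 \<le> q"
  shows "exp (- p) * (q - p) + exp (- q) - exp (- p) \<le> \<bar>p - q\<bar>"
proof (cases "p \<le> q")
  case True
  have "exp (- p) * (q - p) \<le> q - p"
    using True assms mult_right_mono[of "exp (- p)" 1 "q - p"] by simp
  moreover have "exp (- q) \<le> exp (- p)" using True by simp
  ultimately show ?thesis using True by linarith
next
  case False
  have "exp (- q) - exp (- p) = exp (- q) * (1 - exp (- (p - q)))"
    by (simp add: algebra_simps flip: exp_add)
  also have "\<dots> \<le> 1 * (p - q)"
  proof (rule mult_mono)
    show "1 - exp (- (p - q)) \<le> p - q"
      using exp_ge_add_one_self[of "- (p - q)"] by linarith
  qed (use assms False in auto)
  moreover have "exp (- p) * (q - p) \<le> 0" using False by (simp add: mult_nonneg_nonpos)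
  ultimately show ?thesis using False by simp
qed

lemma integrable_exp_minus:
  fixes P :: "'a \<Rightarrow> real"
  assumes "finite_measure M" and [measurable]: "P \<in> borel_measurable M"
    and nonneg: "\<And>x. 0 \<le> P x"
  shows "integrable M (\<lambda>x. exp (- P x))"
  using assms(1) by (rule finite_measure.integrable_const_bound[where B=1]) (auto simp: nonneg)

text \<open>Jensen's inequality for the convex function \<open>exp \<circ> uminus\<close>, via its tangent at the mean.\<close>
lemma exp_minus_integral_le:
  fixes P :: "'a \<Rightarrow> real"
  assumes M: "prob_space M" and P: "integrable M P" and nonneg: "\<And>x. 0 \<le> P x"
  shows "exp (- (\<integral>x. P x \<partial>M)) \<le> (\<integral>x. exp (- P x) \<partial>M)"
proof -
  interpret prob_space M by (fact M)
  define c where "c = (\<integral>x. P x \<partial>M)"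
  have "exp (- c) = (\<integral>x. exp (- c) * (1 - (P x - c)) \<partial>M)"
    using P by (simp add: c_def integral_diff prob_space)
  also have "\<dots> \<le> (\<integral>x. exp (- P x) \<partial>M)"
  proof (rule Bochner_Integration.integral_mono)
    show "integrable M (\<lambda>x. exp (- P x))"
      using P nonneg by (intro integrable_exp_minus) (auto intro: finite_measure_axioms)
    have "1 - (P x - c) \<le> exp (c - P x)" for x
      using exp_ge_add_one_self[of "c - P x"] by linarith
    then have "exp (- c) * (1 - (P x - c)) \<le> exp (- c) * exp (c - P x)" for x
      by (intro mult_left_mono) auto
    then show "exp (- c) * (1 - (P x - c)) \<le> exp (- P x)" for x
      by (simp flip: exp_add)
  qed (use P in auto)
  finally show ?thesis by (simp add: c_def)
qed

lemma dKL_density_eq: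
  fixes f g :: "'a \<Rightarrow> real"
  assumes [measurable]: "f \<in> borel_measurable M" "g \<in> borel_measurable M"
    and pos: "\<And>x. 0 < f x" "\<And>x. 0 < g x"
    and g: "integrable M g" and fg: "integrable M (\<lambda>x. f x * ln (f x / g x))"
  shows "dKL (density M f) (density M g) = ereal (\<integral>x. f x * ln (f x / g x) \<partial>M)"
proof -
  define \<mu> \<nu> where "\<mu> = density M f" and "\<nu> = density M g"
  have sets: "sets \<mu> = sets M" "sets \<nu> = sets M" by (simp_all add: \<mu>_def \<nu>_def)
  have h[measurable]: "(\<lambda>x. ennreal (f x / g x)) \<in> borel_measurable \<nu>"
    by (simp add: measurable_cong_sets[OF sets(2) refl])
  have "ennreal (g x) * ennreal (f x / g x) = ennreal (f x)" for x
    using pos[of x] by (simp flip: ennreal_mult)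
  then have \<mu>_eq: "density \<nu> (\<lambda>x. ennreal (f x / g x)) = \<mu>"
    unfolding \<mu>_def \<nu>_def by (subst density_density_eq) (auto intro!: density_cong)
  have "finite_measure \<nu>"
    using g pos by (intro finite_measureI)
      (simp add: \<nu>_def emeasure_density nn_integral_eq_integral less_imp_le)
  then have "AE x in \<nu>. ennreal (f x / g x) = RN_deriv \<nu> \<mu> x"
    by (intro sigma_finite_measure.RN_deriv_unique[OF finite_measure.sigma_finite_measure h \<mu>_eq])
  moreover have ac: "absolutely_continuous \<nu> \<mu>"
    unfolding \<mu>_eq[symmetric] by (rule absolutely_continuousI_density[OF h])
  ultimately have "AE x in \<mu>. ennreal (f x / g x) = RN_deriv \<nu> \<mu> x"
    by (intro absolutely_continuous_AE[OF _ ac]) (simp_all add: sets)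
  then have AE: "AE x in \<mu>. ln (enn2real (RN_deriv \<nu> \<mu> x)) = ln (f x / g x)"
    by eventually_elim (metis enn2real_ennreal less_imp_le divide_pos_pos pos)
  have [measurable]: "RN_deriv \<nu> \<mu> \<in> borel_measurable \<mu>"
    using borel_measurable_RN_deriv[of \<nu> \<mu>]
    by (simp add: measurable_cong_sets[OF sets(1) refl] measurable_cong_sets[OF sets(2) refl])
  have [measurable]: "(\<lambda>x. ln (f x / g x)) \<in> borel_measurable \<mu>"
    by (simp add: measurable_cong_sets[OF sets(1) refl])
  have int: "integrable \<mu> (\<lambda>x. ln (f x / g x))"
    unfolding \<mu>_def using fg pos by (subst integrable_density) (auto intro: less_imp_le)
  have "integrable \<mu> (\<lambda>x. ln (enn2real (RN_deriv \<nu> \<mu> x)))"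
    using integrable_cong_AE[OF _ _ AE] int by simp
  moreover have "(\<integral>x. ln (enn2real (RN_deriv \<nu> \<mu> x)) \<partial>\<mu>) = (\<integral>x. ln (f x / g x) \<partial>\<mu>)"
    using integral_cong_AE[OF _ _ AE] by simp
  moreover have "\<dots> = (\<integral>x. f x * ln (f x / g x) \<partial>M)"
    unfolding \<mu>_def using pos by (subst integral_density) (auto intro: less_imp_le)
  ultimately show ?thesis
    using ac sets by (simp add: dKL_def \<mu>_def[symmetric] \<nu>_def[symmetric])
qed

lemma integrable_exp_minus_mult:
  fixes P f :: "'a \<Rightarrow> real"
  assumes "finite_measure M" and [measurable]: "P \<in> borel_measurable M"
    and nonneg: "\<And>x. 0 \<le> P x" and f: "integrable M f"
  shows "integrable M (\<lambda>x. exp (- P x) * f x)"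
proof (rule Bochner_Integration.integrable_bound[OF f])
  show "AE x in M. norm (exp (- P x) * f x) \<le> norm (f x)"
    using nonneg by (auto simp: abs_mult intro!: mult_left_le_one_le)
qed (use f in measurable)

lemma integral_exp_minus_pos:
  fixes P :: "'a \<Rightarrow> real"
  assumes "prob_space M" and "integrable M P" and "\<And>x. 0 \<le> P x"
  shows "0 < (\<integral>x. exp (- P x) \<partial>M)"
  using exp_minus_integral_le[OF assms] by (meson exp_gt_zero less_le_trans)

lemma dKL_reweight_eq:
  fixes P Q :: "'a \<Rightarrow> real"
  assumes M: "prob_space M" and P: "integrable M P" and Q: "integrable M Q"
    and P_nonneg: "\<And>x. 0 \<le> P x" and Q_nonneg: "\<And>x. 0 \<le> Q x"
  shows "dKL (reweight M P) (reweight M Q)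
           = ereal ((\<integral>x. exp (- P x) * (Q x - P x) \<partial>M) / (\<integral>x. exp (- P x) \<partial>M)
                    + ln ((\<integral>x. exp (- Q x) \<partial>M) / (\<integral>x. exp (- P x) \<partial>M)))"
proof -
  interpret prob_space M by (fact M)
  have [measurable]: "P \<in> borel_measurable M" "Q \<in> borel_measurable M" using P Q by auto
  define ZP ZQ where "ZP = (\<integral>x. exp (- P x) \<partial>M)" and "ZQ = (\<integral>x. exp (- Q x) \<partial>M)"
  have ZP: "0 < ZP" and ZQ: "0 < ZQ"
    unfolding ZP_def ZQ_def using M P Q P_nonneg Q_nonneg by (auto intro: integral_exp_minus_pos)
  have eP: "integrable M (\<lambda>x. exp (- P x) * c)" for c
    using P_nonneg by (intro integrable_exp_minus_mult finite_measure_axioms) auto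
  have ePQ: "integrable M (\<lambda>x. exp (- P x) * (Q x - P x))"
    using P Q P_nonneg by (intro integrable_exp_minus_mult finite_measure_axioms) auto
  define f g where "f x = exp (- P x) / ZP" and "g x = exp (- Q x) / ZQ" for x
  have f_ln: "f x * ln (f x / g x) = exp (- P x) * (Q x - P x) / ZP + f x * ln (ZQ / ZP)" for x
    using ZP ZQ by (simp add: f_def g_def ln_div ln_mult field_simps)
  have "integrable M (\<lambda>x. f x * ln (f x / g x))"
    unfolding f_ln using eP[of 1] ePQ by (auto simp: f_def)
  then have "dKL (reweight M P) (reweight M Q) = ereal (\<integral>x. f x * ln (f x / g x) \<partial>M)"
    unfolding reweight_def ZP_def[symmetric] ZQ_def[symmetric] f_def[symmetric] g_def[symmetric]
    using ZP ZQ Q_nonneg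
    by (intro dKL_density_eq) (auto simp: f_def g_def intro!: integrable_exp_minus finite_measure_axioms)
  moreover have "(\<integral>x. f x \<partial>M) = 1" using ZP by (simp add: f_def ZP_def)
  ultimately show ?thesis
    using eP[of 1] ePQ unfolding f_ln by (simp add: f_def ZP_def[symmetric] ZQ_def[symmetric])
qed

text \<open>Combining \<open>ln r \<le> r - 1\<close> with the normalisation \<open>Z \<ge> exp (- \<integral>P)\<close>.\<close>
lemma dKL_reweight_le:
  fixes P Q :: "'a \<Rightarrow> real"
  assumes M: "prob_space M" and P: "integrable M P" and Q: "integrable M Q"
    and P_nonneg: "\<And>x. 0 \<le> P x" and Q_nonneg: "\<And>x. 0 \<le> Q x"
  shows "dKL (reweight M P) (reweight M Q) \<le> ereal (exp (\<integral>x. P x \<partial>M) * (\<integral>x. \<bar>P x - Q x\<bar> \<partial>M))"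
proof -
  interpret prob_space M by (fact M)
  have [measurable]: "P \<in> borel_measurable M" "Q \<in> borel_measurable M" using P Q by auto
  define ZP ZQ A where "ZP = (\<integral>x. exp (- P x) \<partial>M)" and "ZQ = (\<integral>x. exp (- Q x) \<partial>M)"
    and "A = (\<integral>x. exp (- P x) * (Q x - P x) \<partial>M)"
  have ZP_ge: "exp (- (\<integral>x. P x \<partial>M)) \<le> ZP"
    unfolding ZP_def by (rule exp_minus_integral_le[OF M P P_nonneg])
  have ZP: "0 < ZP" and ZQ: "0 < ZQ"
    unfolding ZP_def ZQ_def using M P Q P_nonneg Q_nonneg by (auto intro: integral_exp_minus_pos)
  have ints: "integrable M (\<lambda>x. exp (- P x))" "integrable M (\<lambda>x. exp (- Q x))"
    "integrable M (\<lambda>x. exp (- P x) * (Q x - P x))"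
    using P Q P_nonneg Q_nonneg
    by (auto intro!: integrable_exp_minus integrable_exp_minus_mult finite_measure_axioms)
  have "A / ZP + (ZQ / ZP - 1) = (A + ZQ - ZP) / ZP" using ZP by (simp add: field_simps)
  also have "A + ZQ - ZP = (\<integral>x. exp (- P x) * (Q x - P x) + exp (- Q x) - exp (- P x) \<partial>M)"
    using ints unfolding A_def ZP_def ZQ_def by simp
  also have "\<dots> \<le> (\<integral>x. \<bar>P x - Q x\<bar> \<partial>M)"
    using ints P Q exp_minus_diff_le_abs[OF P_nonneg Q_nonneg]
    by (intro Bochner_Integration.integral_mono) auto
  finally have "A / ZP + (ZQ / ZP - 1) \<le> (\<integral>x. \<bar>P x - Q x\<bar> \<partial>M) / ZP"
    using ZP by (simp add: divide_right_mono)
  moreover have "ln (ZQ / ZP) \<le> ZQ / ZP - 1" using ZP ZQ by (intro ln_le_minus_one) simp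
  moreover have "(\<integral>x. \<bar>P x - Q x\<bar> \<partial>M) / ZP \<le> (\<integral>x. \<bar>P x - Q x\<bar> \<partial>M) * exp (\<integral>x. P x \<partial>M)"
  proof -
    have "1 / ZP \<le> exp (\<integral>x. P x \<partial>M)"
      using ZP_ge ZP by (simp add: exp_minus field_simps)
    then show ?thesis
      by (metis divide_inverse inverse_eq_divide integral_nonneg_AE AE_I2 abs_ge_zero mult_left_mono)
  qed
  ultimately show ?thesis
    using dKL_reweight_eq[OF M P Q P_nonneg Q_nonneg]
    by (simp add: A_def ZP_def[symmetric] ZQ_def[symmetric] mult.commute)
qed

text \<open>The bound is minimised at \<open>t = 2 sqrt (S / E)\<close>, with minimum \<open>sqrt (E * S)\<close>.\<close>
lemma le_sqrt_mult_of_scaled_bounds: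
  fixes X E S :: real
  assumes E: "0 \<le> E" and S: "0 \<le> S" and bound: "\<And>t. 0 < t \<Longrightarrow> X \<le> t * E / 4 + S / t"
  shows "X \<le> sqrt (E * S)"
proof (cases "0 < E \<and> 0 < S")
  case True
  define t where "t = 2 * sqrt S / sqrt E"
  have "0 < t" using True by (simp add: t_def)
  moreover have "t * E / 4 = sqrt S * sqrt E / 2" "S / t = sqrt S * sqrt E / 2"
    using True by (simp_all add: t_def field_simps)
  ultimately show ?thesis using bound[of t] by (simp add: real_sqrt_mult mult.commute)
next
  case False
  show ?thesis
  proof (rule ccontr)
    assume "\<not> X \<le> sqrt (E * S)"
    then have X: "0 < X" and "E = 0 \<or> S = 0" using False E S by auto
    then consider "E = 0" | "S = 0" "0 < E" using E by linarith
    then show False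
    proof cases
      case 1
      define t where "t = 2 * (S + 1) / X"
      have "X \<le> S / t" using bound[of t] 1 X S by (simp add: t_def)
      also have "\<dots> < X" using X S by (simp add: t_def field_simps add_nonneg_pos)
      finally show False by simp
    next
      case 2
      have "X \<le> (2 * X / E) * E / 4" using bound[of "2 * X / E"] 2 X by simp
      then show False using 2 X by simp
    qed
  qed
qed

lemma integral_abs_diff_half_quad_forms_le:
  fixes L :: "real^'n^'n" and a b :: "'a \<Rightarrow> real^'n"
  assumes sym: "transpose L = L" and psd: "\<And>v. 0 \<le> v \<bullet> (L *v v)"
    and a: "a \<in> borel_measurable M" and b: "b \<in> borel_measurable M"
    and A: "integrable M (\<lambda>z. a z \<bullet> (L *v a z))" and B: "integrable M (\<lambda>z. b z \<bullet> (L *v b z))"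
  shows "(\<integral>z. \<bar>a z \<bullet> (L *v a z) / 2 - b z \<bullet> (L *v b z) / 2\<bar> \<partial>M)
           \<le> sqrt ((\<integral>z. (a z - b z) \<bullet> (L *v (a z - b z)) \<partial>M)
                    * ((\<integral>z. a z \<bullet> (L *v a z) / 2 \<partial>M) + (\<integral>z. b z \<bullet> (L *v b z) / 2 \<partial>M)))"
proof (rule le_sqrt_mult_of_scaled_bounds)
  have "continuous_on UNIV (\<lambda>v. v \<bullet> (L *v v))"
    by (intro continuous_intros linear_continuous_on matrix_vector_mul_bounded_linear)
  then have meas: "(\<lambda>z. (a z - b z) \<bullet> (L *v (a z - b z))) \<in> borel_measurable M"
    using a b by (intro borel_measurable_continuous_on[where f="\<lambda>v. v \<bullet> (L *v v)"]) auto
  have D: "integrable M (\<lambda>z. (a z - b z) \<bullet> (L *v (a z - b z)))"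
  proof (rule Bochner_Integration.integrable_bound[OF _ meas])
    show "integrable M (\<lambda>z. 2 * (a z \<bullet> (L *v a z)) + 2 * (b z \<bullet> (L *v b z)))" using A B by auto
    show "AE z in M. norm ((a z - b z) \<bullet> (L *v (a z - b z)))
                       \<le> norm (2 * (a z \<bullet> (L *v a z)) + 2 * (b z \<bullet> (L *v b z)))"
      using quad_form_parallelogram[OF sym] psd by (intro AE_I2) (smt (verit) real_norm_def)
  qed
  show "0 \<le> (\<integral>z. (a z - b z) \<bullet> (L *v (a z - b z)) \<partial>M)"
    using psd by simp
  show "0 \<le> (\<integral>z. a z \<bullet> (L *v a z) / 2 \<partial>M) + (\<integral>z. b z \<bullet> (L *v b z) / 2 \<partial>M)"
    using psd by (simp add: add_nonneg_nonneg)
  fix t :: real assume t: "0 < t"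
  have "(\<integral>z. \<bar>a z \<bullet> (L *v a z) / 2 - b z \<bullet> (L *v b z) / 2\<bar> \<partial>M)
          \<le> (\<integral>z. t / 4 * ((a z - b z) \<bullet> (L *v (a z - b z)))
                 + (a z \<bullet> (L *v a z) / 2 + b z \<bullet> (L *v b z) / 2) / t \<partial>M)"
  proof (rule Bochner_Integration.integral_mono)
    show "integrable M (\<lambda>z. \<bar>a z \<bullet> (L *v a z) / 2 - b z \<bullet> (L *v b z) / 2\<bar>)" using A B by auto
    show "integrable M (\<lambda>z. t / 4 * ((a z - b z) \<bullet> (L *v (a z - b z)))
                          + (a z \<bullet> (L *v a z) / 2 + b z \<bullet> (L *v b z) / 2) / t)"
      using A B D by auto
    show "\<bar>a z \<bullet> (L *v a z) / 2 - b z \<bullet> (L *v b z) / 2\<bar>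
            \<le> t / 4 * ((a z - b z) \<bullet> (L *v (a z - b z)))
              + (a z \<bullet> (L *v a z) / 2 + b z \<bullet> (L *v b z) / 2) / t" for z
      by (rule abs_quad_form_diff_le[OF sym psd t])
  qed
  also have "\<dots> = t * (\<integral>z. (a z - b z) \<bullet> (L *v (a z - b z)) \<partial>M) / 4
                   + ((\<integral>z. a z \<bullet> (L *v a z) / 2 \<partial>M) + (\<integral>z. b z \<bullet> (L *v b z) / 2 \<partial>M)) / t"
    using A B D by simp
  finally show "(\<integral>z. \<bar>a z \<bullet> (L *v a z) / 2 - b z \<bullet> (L *v b z) / 2\<bar> \<partial>M) \<le> \<dots>" .
qed

lemma integrable_pair_fst:
  fixes f :: "'a \<Rightarrow> 'b::{banach, second_countable_topology}"
  assumes "prob_space N" and "integrable M f"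
  shows "integrable (M \<Otimes>\<^sub>M N) (\<lambda>z. f (fst z))"
  using integrable_distr_eq[of fst "M \<Otimes>\<^sub>M N" M f] assms
  by (simp add: prob_space.distr_pair_fst)

lemma integral_pair_fst:
  fixes f :: "'a \<Rightarrow> 'b::{banach, second_countable_topology}"
  assumes "prob_space N" and "f \<in> borel_measurable M"
  shows "(\<integral>z. f (fst z) \<partial>(M \<Otimes>\<^sub>M N)) = (\<integral>x. f x \<partial>M)"
  using integral_distr[of fst "M \<Otimes>\<^sub>M N" M f] assms
  by (simp add: prob_space.distr_pair_fst)

lemma exp_mult_sqrt_le:
  fixes a b e n :: real
  assumes "0 \<le> a" "0 \<le> b" "0 \<le> e" "n \<le> 2 * a + 2 * b"
  shows "exp n * sqrt (e * (a + b)) \<le> sqrt 2 * exp (2 * a + 2 * b) * (sqrt a + sqrt b) * sqrt e"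
proof -
  have "sqrt (e * (a + b)) \<le> sqrt e * (sqrt a + sqrt b)"
    using assms sqrt_add_le_add_sqrt[of a b] by (simp add: real_sqrt_mult mult_left_mono)
  also have "\<dots> \<le> sqrt 2 * (sqrt a + sqrt b) * sqrt e"
    using assms mult_right_mono[of 1 "sqrt 2" "(sqrt a + sqrt b) * sqrt e"] by (simp add: ac_simps)
  finally have "sqrt (e * (a + b)) \<le> sqrt 2 * (sqrt a + sqrt b) * sqrt e" .
  moreover have "exp n \<le> exp (2 * a + 2 * b)" using assms by simp
  ultimately have "exp n * sqrt (e * (a + b)) \<le> exp (2 * a + 2 * b) * (sqrt 2 * (sqrt a + sqrt b) * sqrt e)"
    using assms by (intro mult_mono) auto
  then show ?thesis by (simp add: ac_simps)
qed

lemma max_dKL_reweight_half_quad_forms_le: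
  fixes L :: "real^'n^'n" and a b :: "'a \<Rightarrow> real^'n" and P Q :: "'a \<Rightarrow> real"
  assumes \<mu>: "prob_space \<mu>" and sym: "transpose L = L" and psd: "\<And>v. 0 \<le> v \<bullet> (L *v v)"
    and a: "a \<in> borel_measurable \<mu>" and b: "b \<in> borel_measurable \<mu>"
    and P_eq: "\<And>z. P z = b z \<bullet> (L *v b z) / 2" and Q_eq: "\<And>z. Q z = a z \<bullet> (L *v a z) / 2"
    and P: "integrable \<mu> P" and Q: "integrable \<mu> Q"
  shows "max (dKL (reweight \<mu> P) (reweight \<mu> Q)) (dKL (reweight \<mu> Q) (reweight \<mu> P))
           \<le> ereal (sqrt 2 * exp (2 * (\<integral>z. Q z \<partial>\<mu>) + 2 * (\<integral>z. P z \<partial>\<mu>))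
                     * (sqrt (\<integral>z. Q z \<partial>\<mu>) + sqrt (\<integral>z. P z \<partial>\<mu>))
                     * sqrt (\<integral>z. (a z - b z) \<bullet> (L *v (a z - b z)) \<partial>\<mu>))"
proof -
  define nP nQ E X where "nP = (\<integral>z. P z \<partial>\<mu>)" and "nQ = (\<integral>z. Q z \<partial>\<mu>)"
    and "E = (\<integral>z. (a z - b z) \<bullet> (L *v (a z - b z)) \<partial>\<mu>)" and "X = (\<integral>z. \<bar>Q z - P z\<bar> \<partial>\<mu>)"
  have P_nonneg: "0 \<le> P z" and Q_nonneg: "0 \<le> Q z" for z using psd by (simp_all add: P_eq Q_eq)
  have X_le: "X \<le> sqrt (E * (nQ + nP))"
    using integral_abs_diff_half_quad_forms_le[OF sym psd a b] P Q
    unfolding X_def E_def nP_def nQ_def P_eq Q_eq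
    by (simp add: integrable_mult_left_iff[where c="1/2", simplified])
  have "0 \<le> nP" "0 \<le> nQ" "0 \<le> E"
    using P_nonneg Q_nonneg psd by (simp_all add: nP_def nQ_def E_def)
  then have bound: "exp n * X \<le> sqrt 2 * exp (2 * nQ + 2 * nP) * (sqrt nQ + sqrt nP) * sqrt E"
    if "n \<in> {nQ, nP}" for n
    using that exp_mult_sqrt_le[of nQ nP E n] order_trans[OF mult_left_mono[OF X_le]] by auto
  have "dKL (reweight \<mu> P) (reweight \<mu> Q) \<le> ereal (exp nP * X)"
    using dKL_reweight_le[OF \<mu> P Q P_nonneg Q_nonneg] by (simp add: nP_def X_def abs_minus_commute)
  moreover have "dKL (reweight \<mu> Q) (reweight \<mu> P) \<le> ereal (exp nQ * X)"
    using dKL_reweight_le[OF \<mu> Q P Q_nonneg P_nonneg] by (simp add: nQ_def X_def)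
  ultimately show ?thesis
    using bound[of nP] bound[of nQ]
    unfolding nP_def[symmetric] nQ_def[symmetric] E_def[symmetric] by (auto intro: order_trans)
qed

theorem mainTheorem9:
  fixes \<Theta> :: "'b::{banach, second_countable_topology} set"
    and \<mu>\<theta> :: "'b measure"
    and \<mu>\<delta> :: "('b \<Rightarrow> 'u::banach) measure"
    and \<O> :: "'u \<Rightarrow> real^'n"
    and Mdag M :: "'b \<Rightarrow> 'u"
    and \<Sigma> :: "real^'n^'n"
    and y :: "real^'n"
    and \<Phi>dag :: "'b \<Rightarrow> real"
    and \<Phi>joint :: "'b \<times> ('b \<Rightarrow> 'u) \<Rightarrow> real"
  assumes \<Theta>_borel: "\<Theta> \<in> sets borel"
    and \<mu>\<theta>_sets: "sets \<mu>\<theta> = sets (restrict_space borel \<Theta>)"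
    and \<mu>\<theta>_prob: "prob_space \<mu>\<theta>"
    and \<mu>\<delta>_prob: "prob_space \<mu>\<delta>"
    and eval_meas: "(\<lambda>(\<theta>', \<delta>'). \<delta>' \<theta>') \<in> borel_measurable (\<mu>\<theta> \<Otimes>\<^sub>M \<mu>\<delta>)"
    and O_lin: "bounded_linear \<O>"
    and Mdag_meas: "Mdag \<in> borel_measurable \<mu>\<theta>"
    and M_meas: "M \<in> borel_measurable \<mu>\<theta>"
    and \<Sigma>_spd: "spd \<Sigma>"
    and \<Phi>dag_def: "\<And>\<theta>'. \<Phi>dag \<theta>' = 1/2 * (wnorm (matrix_inv \<Sigma>) (y - \<O> (Mdag \<theta>')))\<^sup>2"
    and \<Phi>joint_def: "\<And>\<theta>' \<delta>'. \<Phi>joint (\<theta>', \<delta>') =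
           1/2 * (wnorm (matrix_inv \<Sigma>) (y - \<O> (M \<theta>') - \<O> (\<delta>' \<theta>')))\<^sup>2"
    and \<Phi>dag_L1: "integrable \<mu>\<theta> \<Phi>dag"
    and \<Phi>joint_L1: "integrable (\<mu>\<theta> \<Otimes>\<^sub>M \<mu>\<delta>) \<Phi>joint"
  shows
    "(let \<mu>dag = reweight (\<mu>\<theta> \<Otimes>\<^sub>M \<mu>\<delta>) (\<lambda>(\<theta>', \<delta>'). \<Phi>dag \<theta>');
          \<mu>jt = reweight (\<mu>\<theta> \<Otimes>\<^sub>M \<mu>\<delta>) \<Phi>joint;
          nJ = (\<integral>z. \<bar>\<Phi>joint z\<bar> \<partial>(\<mu>\<theta> \<Otimes>\<^sub>M \<mu>\<delta>));
          nD = (\<integral>t. \<bar>\<Phi>dag t\<bar> \<partial>\<mu>\<theta>);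
          C = sqrt 2 * exp (2 * nJ + 2 * nD) * (sqrt nJ + sqrt nD);
          E = (\<integral>(\<theta>', \<delta>'). \<bar>(wnorm (matrix_inv \<Sigma>)
                   (\<O> ((Mdag \<theta>' - M \<theta>') - \<delta>' \<theta>')))\<^sup>2\<bar> \<partial>(\<mu>\<theta> \<Otimes>\<^sub>M \<mu>\<delta>))
      in max (dKL \<mu>dag \<mu>jt) (dKL \<mu>jt \<mu>dag) \<le> ereal (C * sqrt E))"
proof -
  define \<mu> where "\<mu> = \<mu>\<theta> \<Otimes>\<^sub>M \<mu>\<delta>"
  define L where "L = matrix_inv \<Sigma>"
  define a b where "a z = y - \<O> (M (fst z)) - \<O> (snd z (fst z))"
    and "b z = y - \<O> (Mdag (fst z))" for z :: "'b \<times> ('b \<Rightarrow> 'u)"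
  have L_sym: "transpose L = L" and L_psd: "\<And>v. 0 \<le> v \<bullet> (L *v v)"
    using spd_matrix_inv_spd[OF \<Sigma>_spd] spd_nonneg unfolding L_def spd_def by blast+
  have \<O>_meas: "f \<in> borel_measurable \<mu> \<Longrightarrow> (\<lambda>z. \<O> (f z)) \<in> borel_measurable \<mu>" for f
    using linear_continuous_on[OF O_lin] by (rule borel_measurable_continuous_on)
  have "(\<lambda>z. snd z (fst z)) \<in> borel_measurable \<mu>"
    "(\<lambda>z. M (fst z)) \<in> borel_measurable \<mu>" "(\<lambda>z. Mdag (fst z)) \<in> borel_measurable \<mu>"
    using eval_meas M_meas Mdag_meas by (simp_all add: \<mu>_def split_beta')
  then have a_meas: "a \<in> borel_measurable \<mu>" and b_meas: "b \<in> borel_measurable \<mu>"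
    unfolding a_def b_def
    by (auto intro!: \<O>_meas borel_measurable_diff)
  have "\<O> ((Mdag \<theta>' - M \<theta>') - \<delta>' \<theta>') = a (\<theta>', \<delta>') - b (\<theta>', \<delta>')" for \<theta>' \<delta>'
    by (simp add: a_def b_def linear_diff[OF bounded_linear.linear[OF O_lin]])
  then have misfit_eq: "(\<lambda>(\<theta>', \<delta>'). \<bar>(wnorm (matrix_inv \<Sigma>) (\<O> ((Mdag \<theta>' - M \<theta>') - \<delta>' \<theta>')))\<^sup>2\<bar>)
                          = (\<lambda>z. (a z - b z) \<bullet> (L *v (a z - b z)))"
    using L_psd by (auto simp: L_def wnorm_squared)
  have dag_eq: "\<Phi>dag (fst z) = b z \<bullet> (L *v b z) / 2" for z
    using \<Phi>dag_def[of "fst z"] L_psd by (simp add: b_def L_def wnorm_squared)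
  have joint_eq: "\<Phi>joint z = a z \<bullet> (L *v a z) / 2" for z
    using \<Phi>joint_def[of "fst z" "snd z"] L_psd by (simp add: a_def L_def wnorm_squared)
  have \<mu>_prob: "prob_space \<mu>" unfolding \<mu>_def by (rule prob_space_pair[OF \<mu>\<theta>_prob \<mu>\<delta>_prob])
  have dag_L1: "integrable \<mu> (\<lambda>z. \<Phi>dag (fst z))"
    unfolding \<mu>_def by (rule integrable_pair_fst[OF \<mu>\<delta>_prob \<Phi>dag_L1])
  have joint_L1: "integrable \<mu> \<Phi>joint" using \<Phi>joint_L1 by (simp add: \<mu>_def)
  have "(\<integral>t. \<bar>\<Phi>dag t\<bar> \<partial>\<mu>\<theta>) = (\<integral>z. \<Phi>dag (fst z) \<partial>\<mu>)"
    using \<Phi>dag_L1 integral_pair_fst[OF \<mu>\<delta>_prob, of \<Phi>dag \<mu>\<theta>] by (simp add: \<Phi>dag_def \<mu>_def)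
  moreover have "(\<integral>z. \<bar>\<Phi>joint z\<bar> \<partial>\<mu>) = (\<integral>z. \<Phi>joint z \<partial>\<mu>)"
    using L_psd by (simp add: joint_eq)
  ultimately show ?thesis
    using max_dKL_reweight_half_quad_forms_le[OF \<mu>_prob L_sym L_psd a_meas b_meas dag_eq joint_eq
        dag_L1 joint_L1]
    unfolding Let_def misfit_eq unfolding case_prod_beta' \<mu>_def[symmetric] L_def[symmetric]
    by simp
qed

end
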